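(* Let $N\ge 1$ and $1\le K\le N$ be integers, let $\lambda_s>0$, $c>0$, and let $T_{\mathrm D}>c$ be a fixed deadline. Let $T_1,\dots,T_N$ be i.i.d. with CDF $F(t)=1-e^{-\lambda_s(t-c)}$ for $t>c$ (and $0$ for $t\le c$), let $T_N(K)$ be the $K$-th smallest of them, and fix $n\in\{1,\dots,N\}$. Define the events $$\mathcal C_{\mathrm S,1}=\{T_N(K)<T_{\mathrm D}\}\cap\{T_n\le \min\{T_{\mathrm D},T_N(K)\}\},\qquad \mathcal C_{\mathrm F,1}=\{T_N(K)<T_{\mathrm D}\}\cap\{T_n> \min\{T_{\mathrm D},T_N(K)\}\},$$ both assumed to have positive probability. Then $\mathbb E[T_N(K)\mid\mathcal C_{\mathrm S,1}]=\mathbb E[T_N(K)\mid\mathcal C_{\mathrm F,1}]$ and $\mathbb E[T_N(K)^2\mid\mathcal C_{\mathrm S,1}]=\mathbb E[T_N(K)^2\mid\mathcal C_{\mathrm F,1}]$, and these common values equal $$\frac{1}{1-\mathcal Z_K}\sum_{j=0}^{K-1}\frac{B_{K,j}}{\lambda_s U_{K,j}^2}\Big[1+c\lambda_sU_{K,j}-(1+T_{\mathrm D}\lambda_sU_{K,j})V_{K,j}\Big]$$ and $$\frac{1}{1-\mathcal Z_K}\sum_{j=0}^{K-1}\frac{B_{K,j}}{\lambda_s^2 U_{K,j}^3}\Big[(1+c\lambda_sU_{K,j})^2+1-\big((1+T_{\mathrm D}\lambda_sU_{K,j})^2+1\big)V_{K,j}\Big]$$ respectively, where $B_{K,j}=K\binom{N}{K}\binom{K-1}{j}(-1)^j$,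 $U_{K,j}=N-K+1+j$, $V_{K,j}=e^{-\lambda_sU_{K,j}(T_{\mathrm D}-c)}$, and $\mathcal Z_K=\sum_{i=0}^{K-1}B_{K,i}\frac{V_{K,i}}{U_{K,i}}$.
   Context: Model: an access point multicasts a status update to $N$ devices with i.i.d. shifted-exponential delivery times; transmission terminates at $\min\{T_{\mathrm D},T_N(K)\}$. $\mathcal C_{\mathrm S,1}$: device $n$ receives the update and the transmission stops because $K$ devices received it before the deadline; $\mathcal C_{\mathrm F,1}$: device $n$ fails and the transmission stops because $K$ devices received it before the deadline. *)

theory Defs
  imports "HOL-Probability.Probability"
begin

definition shexp_cdf :: "real \<Rightarrow> real \<Rightarrow> real \<Rightarrow> real" where
  "shexp_cdf lam c t = (if t > c then 1 - exp (- lam * (t - c)) else 0)"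

definition kth_smallest :: "nat \<Rightarrow> nat \<Rightarrow> (nat \<Rightarrow> 'a \<Rightarrow> real) \<Rightarrow> 'a \<Rightarrow> real" where
  "kth_smallest N K T w = sort (map (\<lambda>i. T i w) [1..<N+1]) ! (K - 1)"

definition cond_exp_event :: "'a measure \<Rightarrow> ('a \<Rightarrow> real) \<Rightarrow> 'a set \<Rightarrow> real" where
  "cond_exp_event M X A = (set_lebesgue_integral M A X) / measure M A"

definition coefB :: "nat \<Rightarrow> nat \<Rightarrow> nat \<Rightarrow> real" where
  "coefB N K j = real K * real (N choose K) * real ((K - 1) choose j) * (-1) ^ j"

definition coefU :: "nat \<Rightarrow> nat \<Rightarrow> nat \<Rightarrow> real" where
  "coefU N K j = real N - real K + 1 + real j"

definition coefV :: "real \<Rightarrow> real \<Rightarrow> real \<Rightarrow> nat \<Rightarrow> nat \<Rightarrow> nat \<Rightarrow> real" where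
  "coefV lam c TD N K j = exp (- lam * coefU N K j * (TD - c))"

definition coefZ :: "real \<Rightarrow> real \<Rightarrow> real \<Rightarrow> nat \<Rightarrow> nat \<Rightarrow> real" where
  "coefZ lam c TD N K = (\<Sum>i<K. coefB N K i * coefV lam c TD N K i / coefU N K i)"

end

(* Given that the K-th smallest delivery time T_N(K) equals t, the indices split into the one
   attaining t, K - 1 indices below t and N - K above, and by exchangeability every such
   configuration has the same weight F(t)^(K-1) (1 - F(t))^(N-K) dF(t). Counting only the
   configurations in which device n is at or below t (for C_S), resp. above t (for C_F), therefore
   gives a constant multiple of the law of T_N(K) on {T_N(K) < T_D}; the constant cancels in the
   conditional moments, which both equal E[T_N(K)^p; T_N(K) < T_D] / P(T_N(K) < T_D). The closed
   forms follow by expanding (1 - e^(-lam s))^(K-1) binomially and integrating s^p e^(-a s) for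
   p <= 2; the normalisation sum_j B_(K,j) / U_(K,j) = 1 is an alternating binomial (beta) sum. *)

theory Submission
  imports Defs
begin

section \<open>Binomial sums\<close>

lemma sum_alternating_binomial_div:
  fixes a :: real
  assumes "a > 0"
  shows "(\<Sum>j\<le>k. real (k choose j) * (-1)^j / (a + real j)) = fact k / pochhammer a (Suc k)"
  using assms
proof (induction k arbitrary: a)
  case 0
  then show ?case by simp
next
  case (Suc k)
  have IH: "(\<Sum>j\<le>k. real (k choose j) * (-1)^j / (a + real j)) = fact k / pochhammer a (Suc k)"
    using Suc by blast
  have IH_shifted: "(\<Sum>j\<le>k. real (k choose j) * (-1)^j / ((a+1) + real j)) = fact k / pochhammer (a+1) (Suc k)"
    using Suc.IH[of "a+1"] Suc.prems by simp
  have "(\<Sum>j\<le>Suc k. real (Suc k choose j) * (-1)^j / (a + real j))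
      = 1 / a + (\<Sum>j\<le>k. real (Suc k choose Suc j) * (-1)^(Suc j) / (a + real (Suc j)))"
    by (subst sum.atMost_Suc_shift) simp
  also have "\<dots> = 1 / a + (\<Sum>j\<le>k. real (k choose Suc j) * (-1)^(Suc j) / (a + real (Suc j)))
       + (\<Sum>j\<le>k. real (k choose j) * (-1)^(Suc j) / (a + real (Suc j)))"
    by (simp add: sum.distrib[symmetric] del: binomial_Suc_Suc)
       (intro sum.cong refl, simp add: add_divide_distrib distrib_right)
  also have "1 / a + (\<Sum>j\<le>k. real (k choose Suc j) * (-1)^(Suc j) / (a + real (Suc j)))
      = (\<Sum>j\<le>Suc k. real (k choose j) * (-1)^j / (a + real j))"
    by (subst sum.atMost_Suc_shift) simp
  also have "\<dots> = (\<Sum>j\<le>k. real (k choose j) * (-1)^j / (a + real j))"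
    by simp
  also have "(\<Sum>j\<le>k. real (k choose j) * (-1)^(Suc j) / (a + real (Suc j)))
      = - (\<Sum>j\<le>k. real (k choose j) * (-1)^j / ((a+1) + real j))"
    by (simp add: sum_negf[symmetric] add_ac)
  finally have "(\<Sum>j\<le>Suc k. real (Suc k choose j) * (-1)^j / (a + real j))
      = fact k / pochhammer a (Suc k) - fact k / pochhammer (a+1) (Suc k)"
    using IH IH_shifted by simp
  also have "\<dots> = fact (Suc k) / pochhammer a (Suc (Suc k))"
  proof -
    let ?P = "pochhammer a (Suc (Suc k))"
    have P_right: "?P = pochhammer a (Suc k) * (a + real (Suc k))"
      by (simp add: pochhammer_Suc)
    have P_left: "?P = a * pochhammer (a+1) (Suc k)"
      by (simp add: pochhammer_rec)
    have "fact k / pochhammer a (Suc k) = fact k * (a + real (Suc k)) / ?P"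
      using Suc.prems unfolding P_right by simp
    moreover have "fact k / pochhammer (a+1) (Suc k) = fact k * a / ?P"
      using Suc.prems unfolding P_left by simp
    ultimately show ?thesis
      by (simp add: diff_divide_distrib[symmetric] algebra_simps)
  qed
  finally show ?case .
qed

lemma coefU_pos: "K \<le> N \<Longrightarrow> coefU N K j > 0"
  by (simp add: coefU_def)

lemma sum_coefB_div_coefU:
  assumes "1 \<le> K" "K \<le> N"
  shows "(\<Sum>j<K. coefB N K j / coefU N K j) = 1"
proof -
  define a where "a = real (N - K + 1)"
  have "a > 0" unfolding a_def by simp
  have U: "coefU N K j = a + real j" for j
    using assms unfolding coefU_def a_def by (simp add: of_nat_diff)
  have poch: "pochhammer a K = fact N / fact (N - K)"
  proof -
    have "(fact N :: real) = pochhammer 1 ((N - K) + K)"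
      using assms by (simp add: pochhammer_fact)
    also have "\<dots> = fact (N - K) * pochhammer a K"
      unfolding pochhammer_product' using assms by (simp add: pochhammer_fact a_def add.commute)
    finally show ?thesis by simp
  qed
  have "(\<Sum>j<K. coefB N K j / coefU N K j)
      = real K * real (N choose K) * (\<Sum>j\<le>K-1. real ((K-1) choose j) * (-1)^j / (a + real j))"
    using assms unfolding U coefB_def
    by (simp add: sum_distrib_left mult.assoc lessThan_Suc_atMost[symmetric])
  also have "\<dots> = real K * real (N choose K) * fact (K - 1) / pochhammer a K"
    using sum_alternating_binomial_div[OF \<open>a > 0\<close>, of "K - 1"] assms by simp
  also have "\<dots> = 1"
    using assms unfolding poch
    by (simp add: binomial_fact fact_reduce[of K] field_simps)
  finally show ?thesis .
qed

section \<open>The K-th smallest of a finite family\<close>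

lemma sorted_nth_iff_length_filter:
  fixes s :: "'a :: linorder list"
  assumes "sorted s" "1 \<le> K" "K \<le> length s"
    and down_closed: "\<And>u v. P v \<Longrightarrow> u \<le> v \<Longrightarrow> P u"
  shows "P (s ! (K-1)) \<longleftrightarrow> K \<le> length (filter P s)"
proof -
  let ?A = "{j. j < length s \<and> P (s ! j)}"
  have len: "length (filter P s) = card ?A"
    by (rule length_filter_conv_card)
  show ?thesis
  proof
    assume P_K: "P (s ! (K-1))"
    have "{..<K} \<subseteq> ?A"
    proof
      fix j assume "j \<in> {..<K}"
      then have "j < length s" "s ! j \<le> s ! (K-1)"
        using assms by (auto intro: sorted_nth_mono)
      then show "j \<in> ?A" using down_closed[OF P_K, of "s ! j"] by simp
    qed
    then show "K \<le> length (filter P s)"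
      unfolding len by (metis card_lessThan card_mono finite_Collect_conjI finite_Collect_less_nat)
  next
    assume K_le: "K \<le> length (filter P s)"
    show "P (s ! (K-1))"
    proof (rule ccontr)
      assume not_P_K: "\<not> P (s ! (K-1))"
      have "?A \<subseteq> {..<K-1}"
      proof
        fix j assume j: "j \<in> ?A"
        show "j \<in> {..<K-1}"
        proof (rule ccontr)
          assume "j \<notin> {..<K-1}"
          then have "s ! (K-1) \<le> s ! j"
            using assms j by (intro sorted_nth_mono) auto
          then show False using down_closed[of "s ! j" "s ! (K-1)"] j not_P_K by simp
        qed
      qed
      then have "card ?A \<le> K - 1"
        using card_mono[of "{..<K-1}"] by fastforce
      then show False using K_le len assms by simp
    qed
  qed
qed

lemma kth_smallest_iff_card:
  assumes "1 \<le> K" "K \<le> N" and down_closed: "\<And>u v. P v \<Longrightarrow> u \<le> v \<Longrightarrow> P u"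
  shows "P (kth_smallest N K T w) \<longleftrightarrow> K \<le> card {i\<in>{1..N}. P (T i w)}"
proof -
  let ?xs = "map (\<lambda>i. T i w) [1..<N+1]"
  have "P (sort ?xs ! (K-1)) \<longleftrightarrow> K \<le> length (filter P (sort ?xs))"
    using assms by (intro sorted_nth_iff_length_filter) auto
  also have "length (filter P (sort ?xs)) = length (filter (P \<circ> (\<lambda>i. T i w)) [1..<N+1])"
    by (simp add: filter_sort filter_map)
  also have "\<dots> = card {i\<in>{1..N}. P (T i w)}"
    by (subst distinct_length_filter) (auto intro: arg_cong[where f=card])
  finally show ?thesis unfolding kth_smallest_def .
qed

lemma kth_smallest_mem:
  assumes "1 \<le> K" "K \<le> N"
  shows "\<exists>i\<in>{1..N}. kth_smallest N K T w = T i w"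
proof -
  let ?xs = "map (\<lambda>i. T i w) [1..<N+1]"
  have "sort ?xs ! (K-1) \<in> set (sort ?xs)"
    using assms by (intro nth_mem) auto
  then show ?thesis unfolding kth_smallest_def by auto
qed

lemma kth_smallest_restrict:
  "kth_smallest N K (\<lambda>i x. x i) (\<lambda>i\<in>{1..N}. T i w) = kth_smallest N K T w"
  unfolding kth_smallest_def
  by (intro arg_cong[where f="\<lambda>xs. sort xs ! (K - 1)"] map_cong) auto

lemma borel_measurable_kth_smallest:
  assumes "1 \<le> K" "K \<le> N" "\<And>i. i \<in> {1..N} \<Longrightarrow> T i \<in> borel_measurable M"
  shows "kth_smallest N K T \<in> borel_measurable M"
proof (subst borel_measurable_iff_le, intro allI)
  fix a
  have "kth_smallest N K T w \<le> a \<longleftrightarrow> real K \<le> (\<Sum>i\<in>{1..N}. if T i w \<le> a then 1 else 0)" for w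
    using kth_smallest_iff_card[OF assms(1,2), of "\<lambda>v. v \<le> a" T w]
    by (simp add: sum.inter_filter[symmetric])
  then have "{w \<in> space M. kth_smallest N K T w \<le> a}
      = {w \<in> space M. real K \<le> (\<Sum>i\<in>{1..N}. if T i w \<le> a then 1 else 0)}"
    by simp
  also have "\<dots> \<in> sets M"
    using assms(3) by measurable
  finally show "{w \<in> space M. kth_smallest N K T w \<le> a} \<in> sets M" .
qed

lemma kth_smallest_eq_iff_card_less:
  assumes "1 \<le> K" "K \<le> N" "inj_on (\<lambda>i. T i w) {1..N}" "m \<in> {1..N}"
  shows "kth_smallest N K T w = T m w \<longleftrightarrow> card {i\<in>{1..N}. T i w < T m w} = K - 1"
proof -
  have "{i\<in>{1..N}. T i w \<le> T m w} = insert m {i\<in>{1..N}. T i w < T m w}"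
  proof (intro equalityI subsetI)
    fix i assume i: "i \<in> {i\<in>{1..N}. T i w \<le> T m w}"
    then have "i = m \<or> T i w < T m w"
      using inj_onD[OF assms(3) _ _ assms(4)] by fastforce
    then show "i \<in> insert m {i\<in>{1..N}. T i w < T m w}" using i by blast
  qed (use assms(4) in auto)
  then have "card {i\<in>{1..N}. T i w \<le> T m w} = Suc (card {i\<in>{1..N}. T i w < T m w})"
    by simp
  moreover have "kth_smallest N K T w \<le> T m w \<longleftrightarrow> K \<le> card {i\<in>{1..N}. T i w \<le> T m w}"
    using assms(1,2) by (rule kth_smallest_iff_card) auto
  moreover have "kth_smallest N K T w < T m w \<longleftrightarrow> K \<le> card {i\<in>{1..N}. T i w < T m w}"
    using assms(1,2) by (rule kth_smallest_iff_card) auto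
  ultimately show ?thesis using assms(1) by linarith
qed

text \<open>With distinct values, exactly one index has K - 1 smaller values, and it carries the
  K-th smallest value.\<close>
lemma sum_rank_indicator_kth_smallest:
  fixes g :: "real \<Rightarrow> 'b :: comm_monoid_add"
  assumes "1 \<le> K" "K \<le> N" "inj_on (\<lambda>i. T i w) {1..N}"
  shows "(\<Sum>m\<in>{1..N}. if card {i\<in>{1..N}. T i w < T m w} = K - 1 then g (T m w) else 0)
       = g (kth_smallest N K T w)"
proof -
  obtain m0 where m0: "m0 \<in> {1..N}" "kth_smallest N K T w = T m0 w"
    using kth_smallest_mem[OF assms(1,2), of T w] by blast
  have "card {i\<in>{1..N}. T i w < T m w} = K - 1 \<longleftrightarrow> m = m0" if "m \<in> {1..N}" for m
  proof
    assume "card {i\<in>{1..N}. T i w < T m w} = K - 1"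
    then have "T m w = T m0 w"
      using kth_smallest_eq_iff_card_less[of K N T w, OF assms that] m0(2) by simp
    then show "m = m0" using inj_onD[OF assms(3) _ that m0(1)] by simp
  qed (use kth_smallest_eq_iff_card_less[of K N T w, OF assms m0(1)] m0(2) in simp)
  then have "(\<Sum>m\<in>{1..N}. if card {i\<in>{1..N}. T i w < T m w} = K - 1 then g (T m w) else 0)
      = (\<Sum>m\<in>{1..N}. if m = m0 then g (T m w) else 0)"
    by (intro sum.cong) auto
  also have "\<dots> = g (kth_smallest N K T w)"
    using m0 by simp
  finally show ?thesis .
qed

section \<open>Order configurations under a product measure\<close>

lemma (in prob_space) distr_restrict_eq_PiM_iid:
  assumes "I \<noteq> {}" "\<And>i. i \<in> I \<Longrightarrow> random_variable borel (X i)" "indep_vars (\<lambda>_. borel) X I"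
    and "real_distribution D" "\<And>i. i \<in> I \<Longrightarrow> cdf (distr M borel (X i)) = cdf D"
  shows "distr M (PiM I (\<lambda>_. borel)) (\<lambda>w. \<lambda>i\<in>I. X i w) = PiM I (\<lambda>_. D)"
proof -
  have "distr M (PiM I (\<lambda>_. borel)) (\<lambda>w. \<lambda>i\<in>I. X i w) = PiM I (\<lambda>i. distr M borel (X i))"
    using indep_vars_iff_distr_eq_PiM'[where I=I and M'="\<lambda>_. borel" and X=X] assms(1-3) by simp
  also have "\<dots> = PiM I (\<lambda>_. D)"
    using assms(2,4,5) by (intro PiM_cong refl cdf_unique real_distribution_distr)
  finally show ?thesis .
qed

lemma borel_measurable_PiM_pivot_prod:
  fixes G :: "'b \<Rightarrow> ennreal" and \<phi> :: "'i \<Rightarrow> 'b \<Rightarrow> 'b \<Rightarrow> ennreal"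
  assumes "m \<in> I" "G \<in> borel_measurable D"
    and \<phi>: "\<And>i. i \<in> I \<Longrightarrow> (\<lambda>p. \<phi> i (fst p) (snd p)) \<in> borel_measurable (D \<Otimes>\<^sub>M D)"
  shows "(\<lambda>x. G (x m) * (\<Prod>i\<in>I-{m}. \<phi> i (x i) (x m))) \<in> borel_measurable (PiM I (\<lambda>_. D))"
proof (intro borel_measurable_times_ennreal borel_measurable_prod_ennreal)
  show "(\<lambda>x. G (x m)) \<in> borel_measurable (PiM I (\<lambda>_. D))"
    using measurable_comp[OF measurable_component_singleton[OF \<open>m \<in> I\<close>] assms(2)]
    by (simp add: comp_def)
next
  fix i assume i: "i \<in> I - {m}"
  have "(\<lambda>x. (x i, x m)) \<in> measurable (PiM I (\<lambda>_. D)) (D \<Otimes>\<^sub>M D)"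
    using i \<open>m \<in> I\<close> by (intro measurable_Pair measurable_component_singleton) auto
  from measurable_comp[OF this \<phi>[of i]] i
  show "(\<lambda>x. \<phi> i (x i) (x m)) \<in> borel_measurable (PiM I (\<lambda>_. D))"
    by (simp add: comp_def)
qed

lemma nn_integral_PiM_pivot_prod:
  fixes G :: "'b \<Rightarrow> ennreal" and \<phi> :: "'i \<Rightarrow> 'b \<Rightarrow> 'b \<Rightarrow> ennreal"
  assumes "sigma_finite_measure D" "finite I" "m \<in> I" "G \<in> borel_measurable D"
    and \<phi>: "\<And>i. i \<in> I \<Longrightarrow> (\<lambda>p. \<phi> i (fst p) (snd p)) \<in> borel_measurable (D \<Otimes>\<^sub>M D)"
  shows "(\<integral>\<^sup>+x. G (x m) * (\<Prod>i\<in>I-{m}. \<phi> i (x i) (x m)) \<partial>PiM I (\<lambda>_. D))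
       = (\<integral>\<^sup>+t. G t * (\<Prod>i\<in>I-{m}. \<integral>\<^sup>+y. \<phi> i y t \<partial>D) \<partial>D)"
proof -
  interpret product_sigma_finite "\<lambda>_. D"
    using assms(1) by (simp add: product_sigma_finite_def)
  obtain J where I: "I = insert m J" and "m \<notin> J"
    using mk_disjoint_insert[OF assms(3)] by blast
  then have J: "I - {m} = J" "finite J"
    using assms(2) by auto
  have "(\<lambda>x. G (x m) * (\<Prod>i\<in>J. \<phi> i (x i) (x m))) \<in> borel_measurable (PiM (insert m J) (\<lambda>_. D))"
    using borel_measurable_PiM_pivot_prod[OF assms(3-5)] unfolding J(1) I[symmetric] .
  from product_nn_integral_insert_rev[OF J(2) \<open>m \<notin> J\<close> this]
  have "(\<integral>\<^sup>+x. G (x m) * (\<Prod>i\<in>J. \<phi> i (x i) (x m)) \<partial>PiM I (\<lambda>_. D))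
      = (\<integral>\<^sup>+t. (\<integral>\<^sup>+y. G ((y(m:=t)) m) * (\<Prod>i\<in>J. \<phi> i ((y(m:=t)) i) ((y(m:=t)) m))
           \<partial>PiM J (\<lambda>_. D)) \<partial>D)"
    unfolding I[symmetric] .
  also have "\<dots> = (\<integral>\<^sup>+t. G t * (\<Prod>i\<in>J. \<integral>\<^sup>+y. \<phi> i y t \<partial>D) \<partial>D)"
  proof (rule nn_integral_cong)
    fix t assume t: "t \<in> space D"
    have \<phi>_t: "(\<lambda>y. \<phi> i y t) \<in> borel_measurable D" if "i \<in> J" for i
      using measurable_comp[OF measurable_Pair2'[OF t] \<phi>[of i]] that I by (simp add: comp_def)
    have "(\<integral>\<^sup>+y. G ((y(m:=t)) m) * (\<Prod>i\<in>J. \<phi> i ((y(m:=t)) i) ((y(m:=t)) m)) \<partial>PiM J (\<lambda>_. D))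
        = (\<integral>\<^sup>+y. G t * (\<Prod>i\<in>J. \<phi> i (y i) t) \<partial>PiM J (\<lambda>_. D))"
      using \<open>m \<notin> J\<close> by (intro nn_integral_cong arg_cong2[where f="(*)"] refl prod.cong) auto
    also have "\<dots> = G t * (\<integral>\<^sup>+y. (\<Prod>i\<in>J. \<phi> i (y i) t) \<partial>PiM J (\<lambda>_. D))"
    proof (intro nn_integral_cmult borel_measurable_prod_ennreal)
      fix i assume "i \<in> J"
      then show "(\<lambda>y. \<phi> i (y i) t) \<in> borel_measurable (PiM J (\<lambda>_. D))"
        using measurable_comp[OF measurable_component_singleton[of i J] \<phi>_t[of i]] by (simp add: comp_def)
    qed
    also have "(\<integral>\<^sup>+y. (\<Prod>i\<in>J. \<phi> i (y i) t) \<partial>PiM J (\<lambda>_. D)) = (\<Prod>i\<in>J. \<integral>\<^sup>+y. \<phi> i y t \<partial>D)"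
      using product_nn_integral_prod[OF J(2), of "\<lambda>i y. \<phi> i y t"] \<phi>_t by simp
    finally show "(\<integral>\<^sup>+y. G ((y(m:=t)) m) * (\<Prod>i\<in>J. \<phi> i ((y(m:=t)) i) ((y(m:=t)) m))
        \<partial>PiM J (\<lambda>_. D)) = G t * (\<Prod>i\<in>J. \<integral>\<^sup>+y. \<phi> i y t \<partial>D)" .
  qed
  finally show ?thesis
    unfolding J(1) .
qed

lemma AE_PiM_component_neq:
  fixes D :: "real measure" and I :: "'i set"
  assumes "sigma_finite_measure D" "sets D = sets borel" "finite I"
    and no_atoms: "\<And>t. emeasure D {t} = 0"
    and "i \<in> I" "j \<in> I" "i \<noteq> j"
  shows "AE x in PiM I (\<lambda>_. D). x j \<noteq> x i"
proof -
  define \<phi> :: "'i \<Rightarrow> real \<Rightarrow> real \<Rightarrow> ennreal"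
    where "\<phi> k y t = (if k = j then indicator {t} y else 1)" for k y t
  have \<phi>_meas: "(\<lambda>p. \<phi> k (fst p) (snd p)) \<in> borel_measurable (D \<Otimes>\<^sub>M D)" for k
    unfolding measurable_cong_sets[OF sets_pair_measure_cong[OF assms(2) assms(2)] refl]
    by (cases "k = j") (simp add: \<phi>_def indicator_def; measurable)+
  have diagonal: "(\<Prod>k\<in>I-{i}. \<phi> k (x k) (x i)) = indicator {x. x j = x i} x" for x
    using assms(3,6,7) by (simp add: \<phi>_def prod.remove[of "I-{i}" j] indicator_def)
  have "(\<integral>\<^sup>+x. 1 * (\<Prod>k\<in>I-{i}. \<phi> k (x k) (x i)) \<partial>PiM I (\<lambda>_. D))
      = (\<integral>\<^sup>+t. 1 * (\<Prod>k\<in>I-{i}. \<integral>\<^sup>+y. \<phi> k y t \<partial>D) \<partial>D)"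
    using assms(1,3,5) \<phi>_meas by (intro nn_integral_PiM_pivot_prod) auto
  also have "\<dots> = 0"
  proof -
    have "(\<integral>\<^sup>+y. \<phi> j y t \<partial>D) = 0" for t
      using no_atoms[of t] assms(2) by (simp add: \<phi>_def)
    then have "(\<Prod>k\<in>I-{i}. \<integral>\<^sup>+y. \<phi> k y t \<partial>D) = 0" for t
      using assms(3,6,7) by (intro prod_zero bexI[of _ j]) auto
    then show ?thesis by (simp only: mult_1 nn_integral_const mult_zero_left)
  qed
  finally have "(\<integral>\<^sup>+x. indicator {x. x j = x i} x \<partial>PiM I (\<lambda>_. D)) = 0"
    by (simp add: diagonal)
  moreover have "(\<lambda>x. 1 * (\<Prod>k\<in>I-{i}. \<phi> k (x k) (x i))) \<in> borel_measurable (PiM I (\<lambda>_. D))"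
    using assms(5) \<phi>_meas by (intro borel_measurable_PiM_pivot_prod) auto
  ultimately show ?thesis
    by (subst (asm) nn_integral_0_iff_AE) (auto simp: diagonal)
qed

lemma AE_PiM_inj_on:
  fixes D :: "real measure" and I :: "'i set"
  assumes "sigma_finite_measure D" "sets D = sets borel" "finite I" "\<And>t. emeasure D {t} = 0"
  shows "AE x in PiM I (\<lambda>_. D). inj_on x I"
proof -
  have "AE x in PiM I (\<lambda>_. D). i \<noteq> j \<longrightarrow> x j \<noteq> x i" if "i \<in> I" "j \<in> I" for i j
    using AE_PiM_component_neq[OF assms that] by (cases "i = j") (auto elim: eventually_mono)
  then have "AE x in PiM I (\<lambda>_. D). \<forall>i\<in>I. \<forall>j\<in>I. i \<noteq> j \<longrightarrow> x j \<noteq> x i"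
    using assms(3) by (intro AE_finite_allI) auto
  then show ?thesis
    by eventually_elim (auto simp: inj_on_def)
qed

lemma borel_measurable_PiM_below_set:
  fixes D :: "real measure" and I :: "'i set" and G :: "real \<Rightarrow> ennreal"
  assumes "sets D = sets borel" "finite I" "m \<in> I" "S \<subseteq> I - {m}" "G \<in> borel_measurable borel"
  shows "(\<lambda>x. G (x m) * indicator {x. {i\<in>I-{m}. x i < x m} = S} x) \<in> borel_measurable (PiM I (\<lambda>_. D))"
proof -
  have below_eq: "{x. {i\<in>I-{m}. x i < x m} = S} = {x. \<forall>i\<in>I-{m}. (x i < x m) = (i \<in> S)}"
    using assms(4) by auto
  have "Measurable.pred (PiM I (\<lambda>_. borel :: real measure)) (\<lambda>x. (x i < x m) = (i \<in> S))"
    if "i \<in> I" for i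
    using that assms(3) by measurable
  then have "Measurable.pred (PiM I (\<lambda>_. borel :: real measure))
      (\<lambda>x. \<forall>i\<in>I-{m}. (x i < x m) = (i \<in> S))"
    using assms(2) by (intro pred_intros_finite) auto
  then have "(\<lambda>x. G (x m) * indicator {x. \<forall>i\<in>I-{m}. (x i < x m) = (i \<in> S)} x)
      \<in> borel_measurable (PiM I (\<lambda>_. borel))"
    using assms(3,5) by measurable
  then show ?thesis
    unfolding below_eq measurable_cong_sets[OF sets_PiM_cong[OF refl assms(1)] refl] .
qed

lemma nn_integral_PiM_below_set:
  fixes D :: "real measure" and I :: "'i set" and G :: "real \<Rightarrow> ennreal"
  assumes "sigma_finite_measure D" "sets D = sets borel" "finite I" "m \<in> I" "S \<subseteq> I - {m}"
    and "G \<in> borel_measurable borel"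
  shows "(\<integral>\<^sup>+x. G (x m) * indicator {x. {i\<in>I-{m}. x i < x m} = S} x \<partial>PiM I (\<lambda>_. D))
       = (\<integral>\<^sup>+t. G t * emeasure D {..<t} ^ card S * emeasure D {t..} ^ (card I - 1 - card S) \<partial>D)"
proof -
  define \<phi> :: "'i \<Rightarrow> real \<Rightarrow> real \<Rightarrow> ennreal"
    where "\<phi> i y t = (if i \<in> S then indicator {..<t} y else indicator {t..} y)" for i y t
  have \<phi>_meas: "(\<lambda>p. \<phi> i (fst p) (snd p)) \<in> borel_measurable (D \<Otimes>\<^sub>M D)" for i
    unfolding measurable_cong_sets[OF sets_pair_measure_cong[OF assms(2) assms(2)] refl]
    by (cases "i \<in> S") (simp add: \<phi>_def indicator_def; measurable)+
  have "(\<Prod>i\<in>I-{m}. \<phi> i (x i) (x m)) = indicator {x. {i\<in>I-{m}. x i < x m} = S} x" for x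
  proof (cases "{i\<in>I-{m}. x i < x m} = S")
    case True
    then have "\<phi> i (x i) (x m) = 1" if "i \<in> I - {m}" for i
      using that by (auto simp: \<phi>_def split: split_indicator)
    then show ?thesis using True by (simp add: prod.neutral)
  next
    case False
    then obtain i where "i \<in> I - {m}" "(x i < x m) \<noteq> (i \<in> S)"
      using assms(5) by auto
    then show ?thesis
      using False assms(3) by (auto simp: \<phi>_def intro!: prod_zero bexI[of _ i])
  qed
  then have "(\<integral>\<^sup>+x. G (x m) * indicator {x. {i\<in>I-{m}. x i < x m} = S} x \<partial>PiM I (\<lambda>_. D))
      = (\<integral>\<^sup>+t. G t * (\<Prod>i\<in>I-{m}. \<integral>\<^sup>+y. \<phi> i y t \<partial>D) \<partial>D)"
    using assms \<phi>_meas
    by (simp add: nn_integral_PiM_pivot_prod[symmetric] measurable_cong_sets[OF assms(2) refl])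
  also have "\<dots> = (\<integral>\<^sup>+t. G t * emeasure D {..<t} ^ card S * emeasure D {t..} ^ (card I - 1 - card S) \<partial>D)"
  proof (rule nn_integral_cong)
    fix t
    have "(\<Prod>i\<in>I-{m}. \<integral>\<^sup>+y. \<phi> i y t \<partial>D)
        = (\<Prod>i\<in>I-{m}-S. \<integral>\<^sup>+y. \<phi> i y t \<partial>D) * (\<Prod>i\<in>S. \<integral>\<^sup>+y. \<phi> i y t \<partial>D)"
      using assms(3,5) by (intro prod.subset_diff) auto
    also have "\<dots> = emeasure D {t..} ^ card (I - {m} - S) * emeasure D {..<t} ^ card S"
      using assms(2) by (simp add: \<phi>_def)
    also have "card (I - {m} - S) = card I - 1 - card S"
      using assms(3-5) by (simp add: card_Diff_subset finite_subset)
    finally show "G t * (\<Prod>i\<in>I-{m}. \<integral>\<^sup>+y. \<phi> i y t \<partial>D)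
        = G t * emeasure D {..<t} ^ card S * emeasure D {t..} ^ (card I - 1 - card S)"
      by (simp add: ac_simps)
  qed
  finally show ?thesis .
qed

text \<open>The possible sets of indices lying strictly below x m when x m is the K-th smallest
  value, split by whether the marked index n lies at or below it (b) or above it.\<close>
definition rank_configs :: "nat \<Rightarrow> nat \<Rightarrow> nat \<Rightarrow> bool \<Rightarrow> nat \<Rightarrow> nat set set" where
  "rank_configs N K n b m = {S. S \<subseteq> {1..N} - {m} \<and> card S = K - 1 \<and> (n = m \<or> n \<in> S) = b}"

lemma finite_rank_configs: "finite (rank_configs N K n b m)"
  unfolding rank_configs_def by (rule finite_subset[of _ "Pow ({1..N} - {m})"]) auto

lemma kth_smallest_marked_eq_sum_rank_configs:
  fixes x :: "nat \<Rightarrow> real" and G :: "real \<Rightarrow> 'b :: comm_semiring_1"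
  assumes "1 \<le> K" "K \<le> N" "n \<in> {1..N}" "inj_on x {1..N}"
  defines "kt \<equiv> kth_smallest N K (\<lambda>i x. x i)"
  shows "G (kt x) * indicator {x. (x n \<le> kt x) = b} x
       = (\<Sum>m\<in>{1..N}. \<Sum>S\<in>rank_configs N K n b m.
            G (x m) * indicator {x. {i\<in>{1..N}-{m}. x i < x m} = S} x)"
proof -
  have below: "{i\<in>{1..N}. x i < x m} = {i\<in>{1..N}-{m}. x i < x m}" for m
    by auto
  have "G (kt x) * indicator {x. (x n \<le> kt x) = b} x
      = (\<Sum>m\<in>{1..N}. if card {i\<in>{1..N}. x i < x m} = K - 1
           then G (x m) * (if (x n \<le> x m) = b then 1 else 0) else 0)"
    using sum_rank_indicator_kth_smallest[where T="\<lambda>i x. x i" and w=x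
        and g="\<lambda>t. G t * (if (x n \<le> t) = b then 1 else 0)", OF assms(1,2,4)]
    by (simp add: kt_def indicator_def)
  also have "\<dots> = (\<Sum>m\<in>{1..N}. \<Sum>S\<in>rank_configs N K n b m.
            G (x m) * indicator {x. {i\<in>{1..N}-{m}. x i < x m} = S} x)"
  proof (rule sum.cong[OF refl])
    fix m assume m: "m \<in> {1..N}"
    let ?B = "{i\<in>{1..N}-{m}. x i < x m}"
    have "(x n \<le> x m) \<longleftrightarrow> n = m \<or> n \<in> ?B"
      using m assms(3) inj_onD[OF assms(4), of n m] by (auto simp: order_le_less)
    then have config: "(card {i\<in>{1..N}. x i < x m} = K - 1 \<and> (x n \<le> x m) = b)
        \<longleftrightarrow> ?B \<in> rank_configs N K n b m"
      unfolding below rank_configs_def by auto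
    have "(\<Sum>S\<in>rank_configs N K n b m. G (x m) * indicator {x. {i\<in>{1..N}-{m}. x i < x m} = S} x)
        = G (x m) * (\<Sum>S\<in>rank_configs N K n b m. if ?B = S then 1 else 0)"
      by (simp add: sum_distrib_left indicator_def of_bool_def)
    also have "\<dots> = G (x m) * (if ?B \<in> rank_configs N K n b m then 1 else 0)"
      by (simp only: sum.delta' finite_rank_configs)
    finally show "(if card {i\<in>{1..N}. x i < x m} = K - 1
           then G (x m) * (if (x n \<le> x m) = b then 1 else 0) else 0)
        = (\<Sum>S\<in>rank_configs N K n b m. G (x m) * indicator {x. {i\<in>{1..N}-{m}. x i < x m} = S} x)"
      using config by auto
  qed
  finally show ?thesis .
qed

lemma nn_integral_PiM_kth_smallest_marked:
  fixes D :: "real measure" and G :: "real \<Rightarrow> ennreal"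
  assumes "sigma_finite_measure D" "sets D = sets borel" "\<And>t. emeasure D {t} = 0"
    and "1 \<le> K" "K \<le> N" "n \<in> {1..N}" "G \<in> borel_measurable borel"
  defines "kt \<equiv> kth_smallest N K (\<lambda>i x. x i)"
  shows "(\<integral>\<^sup>+x. G (kt x) * indicator {x. (x n \<le> kt x) = b} x \<partial>PiM {1..N} (\<lambda>_. D))
       = of_nat (\<Sum>m\<in>{1..N}. card (rank_configs N K n b m))
         * (\<integral>\<^sup>+t. G t * emeasure D {..<t} ^ (K - 1) * emeasure D {t..} ^ (N - K) \<partial>D)"
proof -
  let ?P = "PiM {1..N} (\<lambda>_. D)"
  let ?J = "\<integral>\<^sup>+t. G t * emeasure D {..<t} ^ (K - 1) * emeasure D {t..} ^ (N - K) \<partial>D"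
  have config_meas: "(\<lambda>x. G (x m) * indicator {x. {i\<in>{1..N}-{m}. x i < x m} = S} x) \<in> borel_measurable ?P"
    if "m \<in> {1..N}" "S \<in> rank_configs N K n b m" for m S
    using that assms(2,7) by (intro borel_measurable_PiM_below_set) (auto simp: rank_configs_def)
  have "AE x in ?P. G (kt x) * indicator {x. (x n \<le> kt x) = b} x
      = (\<Sum>m\<in>{1..N}. \<Sum>S\<in>rank_configs N K n b m.
            G (x m) * indicator {x. {i\<in>{1..N}-{m}. x i < x m} = S} x)"
    using AE_PiM_inj_on[OF assms(1,2) finite_atLeastAtMost assms(3)]
  proof eventually_elim
    case (elim x)
    then show ?case
      unfolding kt_def by (rule kth_smallest_marked_eq_sum_rank_configs[OF assms(4-6)])
  qed
  then have "(\<integral>\<^sup>+x. G (kt x) * indicator {x. (x n \<le> kt x) = b} x \<partial>?P)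
      = (\<integral>\<^sup>+x. (\<Sum>m\<in>{1..N}. \<Sum>S\<in>rank_configs N K n b m.
            G (x m) * indicator {x. {i\<in>{1..N}-{m}. x i < x m} = S} x) \<partial>?P)"
    by (rule nn_integral_cong_AE)
  also have "\<dots> = (\<Sum>m\<in>{1..N}. \<Sum>S\<in>rank_configs N K n b m.
      \<integral>\<^sup>+x. G (x m) * indicator {x. {i\<in>{1..N}-{m}. x i < x m} = S} x \<partial>?P)"
    using config_meas
    by (subst nn_integral_sum, simp_all add: borel_measurable_sum)
       (intro sum.cong refl nn_integral_sum, auto)
  also have "\<dots> = (\<Sum>m\<in>{1..N}. \<Sum>S\<in>rank_configs N K n b m. ?J)"
  proof (intro sum.cong refl)
    fix m S assume "m \<in> {1..N}" "S \<in> rank_configs N K n b m"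
    moreover have "N - 1 - (K - 1) = N - K"
      using assms(4) by simp
    ultimately show "(\<integral>\<^sup>+x. G (x m) * indicator {x. {i\<in>{1..N}-{m}. x i < x m} = S} x \<partial>?P) = ?J"
      using assms(1,2,7) by (subst nn_integral_PiM_below_set) (auto simp: rank_configs_def)
  qed
  also have "\<dots> = of_nat (\<Sum>m\<in>{1..N}. card (rank_configs N K n b m)) * ?J"
    by (simp add: sum_distrib_right)
  finally show ?thesis .
qed

section \<open>The shifted exponential distribution\<close>

definition shexp_measure :: "real \<Rightarrow> real \<Rightarrow> real measure" where
  "shexp_measure lam c = distr (density lborel (exponential_density lam)) borel (\<lambda>x. x + c)"

lemma sets_shexp_measure [measurable_cong]: "sets (shexp_measure lam c) = sets borel"
  by (simp add: shexp_measure_def)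

lemma space_shexp_measure: "space (shexp_measure lam c) = UNIV"
  by (simp add: shexp_measure_def)

lemma prob_space_shexp_measure: "lam > 0 \<Longrightarrow> prob_space (shexp_measure lam c)"
  unfolding shexp_measure_def
  by (intro prob_space.prob_space_distr prob_space_exponential_density) auto

lemma shexp_cdf_nonneg: "lam > 0 \<Longrightarrow> 0 \<le> shexp_cdf lam c t"
  by (simp add: shexp_cdf_def)

lemma borel_measurable_shexp_cdf [measurable]: "shexp_cdf lam c \<in> borel_measurable borel"
  unfolding shexp_cdf_def[abs_def] by measurable

lemma emeasure_shexp_measure:
  "A \<in> sets borel \<Longrightarrow>
    emeasure (shexp_measure lam c) A = emeasure (density lborel (exponential_density lam)) ((\<lambda>x. x + c) -` A)"
  unfolding shexp_measure_def by (subst emeasure_distr) auto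

lemma emeasure_shexp_measure_atMost:
  assumes "lam > 0"
  shows "emeasure (shexp_measure lam c) {..t} = ennreal (shexp_cdf lam c t)"
proof -
  have "(\<lambda>x. x + c) -` {..t} = {..t - c}"
    by auto
  then have "emeasure (shexp_measure lam c) {..t} = erlang_CDF 0 lam (t - c)"
    using assms by (simp add: emeasure_shexp_measure emeasure_erlang_density)
  then show ?thesis
    by (auto simp: erlang_CDF_0 shexp_cdf_def)
qed

lemma emeasure_shexp_measure_singleton: "emeasure (shexp_measure lam c) {t} = 0"
proof -
  have "(\<lambda>x. x + c) -` {t} = {t - c}"
    by auto
  then have "emeasure (shexp_measure lam c) {t}
      = (\<integral>\<^sup>+x. ennreal (exponential_density lam x) * indicator {t - c} x \<partial>lborel)"
    by (simp add: emeasure_shexp_measure emeasure_density)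
  also have "\<dots> = 0"
    using AE_lborel_singleton[of "t - c"]
    by (intro nn_integral_zero') (auto elim!: eventually_mono)
  finally show ?thesis .
qed

lemma emeasure_shexp_measure_lessThan:
  assumes "lam > 0"
  shows "emeasure (shexp_measure lam c) {..<t} = ennreal (shexp_cdf lam c t)"
proof -
  have "emeasure (shexp_measure lam c) {..<t} + emeasure (shexp_measure lam c) {t}
      = emeasure (shexp_measure lam c) {..t}"
    by (subst plus_emeasure) (auto simp: sets_shexp_measure intro: arg_cong[where f="emeasure _"])
  then show ?thesis
    using assms by (simp add: emeasure_shexp_measure_singleton emeasure_shexp_measure_atMost)
qed

lemma emeasure_shexp_measure_atLeast:
  assumes "lam > 0"
  shows "emeasure (shexp_measure lam c) {t..} = ennreal (1 - shexp_cdf lam c t)"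
proof -
  interpret prob_space "shexp_measure lam c"
    using assms by (rule prob_space_shexp_measure)
  have "measure (shexp_measure lam c) (space (shexp_measure lam c) - {..<t}) = 1 - shexp_cdf lam c t"
    using assms emeasure_shexp_measure_lessThan[OF assms, of c t]
    by (subst prob_compl) (auto simp: measure_def shexp_cdf_nonneg)
  moreover have "space (shexp_measure lam c) - {..<t} = {t..}"
    by (auto simp: space_shexp_measure)
  ultimately show ?thesis
    by (simp add: emeasure_eq_measure)
qed

lemma cdf_shexp_measure: "lam > 0 \<Longrightarrow> cdf (shexp_measure lam c) t = shexp_cdf lam c t"
  by (simp add: cdf_def measure_def emeasure_shexp_measure_atMost shexp_cdf_nonneg)

lemma real_distribution_shexp_measure: "lam > 0 \<Longrightarrow> real_distribution (shexp_measure lam c)"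
  by (simp add: real_distribution_def real_distribution_axioms_def prob_space_shexp_measure
      sets_shexp_measure)

lemma AE_shexp_measure_gt:
  assumes "lam > 0"
  shows "AE t in shexp_measure lam c. c < t"
proof -
  have "AE x in density lborel (exponential_density lam). c < x + c"
    using AE_lborel_singleton[of 0]
    by (subst AE_density) (auto elim!: eventually_mono simp: exponential_density_def)
  then show ?thesis
    unfolding shexp_measure_def by (subst AE_distr_iff) auto
qed

lemma nn_integral_shexp_measure:
  "\<psi> \<in> borel_measurable borel \<Longrightarrow>
    (\<integral>\<^sup>+t. \<psi> t \<partial>shexp_measure lam c) = (\<integral>\<^sup>+s. ennreal (exponential_density lam s) * \<psi> (s + c) \<partial>lborel)"
  unfolding shexp_measure_def by (subst nn_integral_distr) (auto simp: nn_integral_density)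

section \<open>Partial moments of the K-th order statistic\<close>

text \<open>In the variable s = t - c this is the integral of t^p F(t)^(K-1) (1 - F(t))^(N-K) F'(t) over
  c < t < TD, with F = shexp_cdf lam c; K * (N choose K) times it is E[T_N(K)^p; T_N(K) < TD].\<close>
definition kth_partial_moment :: "real \<Rightarrow> real \<Rightarrow> real \<Rightarrow> nat \<Rightarrow> nat \<Rightarrow> nat \<Rightarrow> real" where
  "kth_partial_moment lam c TD N K p = (LINT s:{0..TD - c}|lborel.
     lam * exp (- lam * s) * (s + c) ^ p * (1 - exp (- lam * s)) ^ (K - 1) * exp (- lam * s) ^ (N - K))"

lemma kth_partial_moment_nonneg:
  "lam > 0 \<Longrightarrow> c \<ge> 0 \<Longrightarrow> kth_partial_moment lam c TD N K p \<ge> 0"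
  unfolding kth_partial_moment_def set_lebesgue_integral_def
  by (intro Bochner_Integration.integral_nonneg) (auto simp: indicator_def)

lemma nn_integral_kth_partial_moment:
  assumes "lam > 0" "c \<ge> 0"
  shows "(\<integral>\<^sup>+s. ennreal (indicator {0..TD - c} s * (lam * exp (- lam * s) * (s + c) ^ p
            * (1 - exp (- lam * s)) ^ (K - 1) * exp (- lam * s) ^ (N - K))) \<partial>lborel)
       = ennreal (kth_partial_moment lam c TD N K p)"
  unfolding kth_partial_moment_def set_lebesgue_integral_def real_scaleR_def
proof (rule nn_integral_eq_integral)
  have "set_integrable lborel {0..TD - c} (\<lambda>s. lam * exp (- lam * s) * (s + c) ^ p
            * (1 - exp (- lam * s)) ^ (K - 1) * exp (- lam * s) ^ (N - K))"
    by (intro borel_integrable_atLeastAtMost' continuous_intros)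
  then show "integrable lborel (\<lambda>s. indicator {0..TD - c} s * (lam * exp (- lam * s) * (s + c) ^ p
            * (1 - exp (- lam * s)) ^ (K - 1) * exp (- lam * s) ^ (N - K)))"
    by (simp add: set_integrable_def)
  show "AE s in lborel. 0 \<le> indicator {0..TD - c} s * (lam * exp (- lam * s) * (s + c) ^ p
            * (1 - exp (- lam * s)) ^ (K - 1) * exp (- lam * s) ^ (N - K))"
    using assms by (auto simp: indicator_def)
qed

lemma nn_integral_shexp_kth_density:
  assumes "lam > 0" "c \<ge> 0"
  defines "D \<equiv> shexp_measure lam c"
  shows "(\<integral>\<^sup>+t. ennreal (t ^ p) * indicator {..<TD} t * emeasure D {..<t} ^ (K - 1)
            * emeasure D {t..} ^ (N - K) \<partial>D)
         = ennreal (kth_partial_moment lam c TD N K p)"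
proof -
  let ?f = "\<lambda>s. lam * exp (- lam * s) * (s + c) ^ p * (1 - exp (- lam * s)) ^ (K - 1)
                * exp (- lam * s) ^ (N - K)"
  have F_shift: "shexp_cdf lam c (s + c) = 1 - exp (- lam * s)" if "s \<ge> 0" for s
    using that by (auto simp: shexp_cdf_def)
  have "(\<integral>\<^sup>+t. ennreal (t ^ p) * indicator {..<TD} t * emeasure D {..<t} ^ (K - 1)
            * emeasure D {t..} ^ (N - K) \<partial>D)
      = (\<integral>\<^sup>+s. ennreal (exponential_density lam s) * (ennreal ((s + c) ^ p) * indicator {..<TD} (s + c)
            * ennreal (shexp_cdf lam c (s + c)) ^ (K - 1) * ennreal (1 - shexp_cdf lam c (s + c)) ^ (N - K))
          \<partial>lborel)"
    unfolding D_def using assms(1)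
    by (simp add: emeasure_shexp_measure_lessThan emeasure_shexp_measure_atLeast
        nn_integral_shexp_measure)
  also have "\<dots> = (\<integral>\<^sup>+s. ennreal (indicator {0..TD - c} s * ?f s) \<partial>lborel)"
    using AE_lborel_singleton[of "TD - c"]
  proof (intro nn_integral_cong_AE, eventually_elim)
    case (elim s)
    show ?case
    proof (cases "0 \<le> s \<and> s < TD - c")
      case True
      have "ennreal (exponential_density lam s) * (ennreal ((s + c) ^ p) * indicator {..<TD} (s + c)
            * ennreal (shexp_cdf lam c (s + c)) ^ (K - 1) * ennreal (1 - shexp_cdf lam c (s + c)) ^ (N - K))
          = ennreal (lam * exp (- lam * s)) * (ennreal ((s + c) ^ p)
            * ennreal (1 - exp (- lam * s)) ^ (K - 1) * ennreal (exp (- lam * s)) ^ (N - K))"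
        using True F_shift[of s] by (simp add: exponential_density_def mult.commute)
      also have "\<dots> = ennreal (?f s)"
        using True assms(1,2)
        by (simp add: ennreal_power ennreal_mult'[symmetric] mult.assoc)
      finally show ?thesis
        using True by simp
    next
      case False
      then show ?thesis
        using elim by (auto simp: exponential_density_def)
    qed
  qed
  also have "\<dots> = ennreal (kth_partial_moment lam c TD N K p)"
    by (rule nn_integral_kth_partial_moment[OF assms(1,2)])
  finally show ?thesis .
qed

lemma kth_partial_moment_eq_sum_coefB:
  assumes "1 \<le> K" "K \<le> N"
  shows "real K * real (N choose K) * kth_partial_moment lam c TD N K p
       = (\<Sum>j<K. coefB N K j * (LINT s:{0..TD - c}|lborel. lam * (s + c) ^ p * exp (- (lam * coefU N K j * s))))"
proof -
  let ?g = "\<lambda>j s. lam * (s + c) ^ p * exp (- (lam * coefU N K j * s))"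
  have expand: "lam * exp (- lam * s) * (s + c) ^ p * (1 - exp (- lam * s)) ^ (K - 1) * exp (- lam * s) ^ (N - K)
      = (\<Sum>j<K. real ((K-1) choose j) * (-1)^j * ?g j s)" for s
  proof -
    define e where "e = exp (- lam * s)"
    have binomial: "(1 - e) ^ (K - 1) = (\<Sum>j<K. real ((K-1) choose j) * (-1)^j * e ^ j)"
      using binomial_ring[of "-e" 1 "K - 1"] assms(1)
      by (simp add: lessThan_Suc_atMost[symmetric] power_minus' mult.assoc)
    have exponent: "e * e ^ j * e ^ (N - K) = exp (- (lam * coefU N K j * s))" for j
    proof -
      have "e * e ^ j * e ^ (N - K) = exp (- lam * s + real j * (- lam * s) + real (N - K) * (- lam * s))"
        by (simp only: e_def exp_add exp_of_nat_mult)
      also have "- lam * s + real j * (- lam * s) + real (N - K) * (- lam * s) = - (lam * coefU N K j * s)"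
        using assms by (simp add: coefU_def of_nat_diff algebra_simps)
      finally show ?thesis .
    qed
    have "lam * e * (s + c) ^ p * (1 - e) ^ (K - 1) * e ^ (N - K)
        = (\<Sum>j<K. real ((K-1) choose j) * (-1)^j * (lam * (s + c) ^ p * (e * e ^ j * e ^ (N - K))))"
      unfolding binomial by (simp add: sum_distrib_left sum_distrib_right ac_simps)
    then show ?thesis
      unfolding e_def[symmetric] exponent .
  qed
  have "set_integrable lborel {0..TD - c} (?g j)" for j
    by (intro borel_integrable_atLeastAtMost' continuous_intros)
  then have integrable: "integrable lborel (\<lambda>s. indicator {0..TD - c} s * ?g j s)" for j
    by (simp add: set_integrable_def)
  have "kth_partial_moment lam c TD N K p
      = (LINT s|lborel. (\<Sum>j<K. real ((K-1) choose j) * (-1)^j * (indicator {0..TD - c} s * ?g j s)))"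
    unfolding kth_partial_moment_def set_lebesgue_integral_def expand
    by (simp add: sum_distrib_left ac_simps)
  also have "\<dots> = (\<Sum>j<K. real ((K-1) choose j) * (-1)^j * (LINT s:{0..TD - c}|lborel. ?g j s))"
    unfolding set_lebesgue_integral_def using integrable
    by (simp add: Bochner_Integration.integral_sum)
  finally have "kth_partial_moment lam c TD N K p
      = (\<Sum>j<K. real ((K-1) choose j) * (-1)^j * (LINT s:{0..TD - c}|lborel. ?g j s))" .
  then show ?thesis
    by (simp add: coefB_def sum_distrib_left ac_simps)
qed

lemma set_integral_exp_decay:
  fixes a l d :: real
  assumes "a > 0" "d \<ge> 0"
  shows "(LINT s:{0..d}|lborel. l * exp (- (a * s))) = l / a * (1 - exp (- (a * d)))" (is "_ = ?rhs")
proof -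
  have "(LINT s:{0..d}|lborel. l * exp (- (a * s)))
      = - l / a * exp (- (a * d)) - - l / a * exp (- (a * 0))"
    unfolding set_lebesgue_integral_def
  proof (rule integral_FTC_atLeastAtMost[OF assms(2)])
    fix x
    show "((\<lambda>s. - l / a * exp (- (a * s))) has_vector_derivative l * exp (- (a * x))) (at x within {0..d})"
      unfolding has_real_derivative_iff_has_vector_derivative[symmetric]
      using assms by (auto intro!: derivative_eq_intros simp: field_simps)
  qed (intro continuous_intros)
  also have "\<dots> = ?rhs"
    using assms by (simp add: field_simps)
  finally show ?thesis .
qed

lemma set_integral_linear_exp_decay:
  fixes a l d c :: real
  assumes "a > 0" "d \<ge> 0"
  shows "(LINT s:{0..d}|lborel. l * (s + c) * exp (- (a * s)))
       = l / a^2 * (1 + c * a - (1 + (d + c) * a) * exp (- (a * d)))" (is "_ = ?rhs")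
proof -
  have "(LINT s:{0..d}|lborel. l * (s + c) * exp (- (a * s)))
      = - l / a^2 * exp (- (a * d)) * (1 + (d + c) * a) - - l / a^2 * exp (- (a * 0)) * (1 + (0 + c) * a)"
    unfolding set_lebesgue_integral_def
  proof (rule integral_FTC_atLeastAtMost[OF assms(2)])
    fix x
    show "((\<lambda>s. - l / a^2 * exp (- (a * s)) * (1 + (s + c) * a))
        has_vector_derivative l * (x + c) * exp (- (a * x))) (at x within {0..d})"
      unfolding has_real_derivative_iff_has_vector_derivative[symmetric]
      using assms by (auto intro!: derivative_eq_intros simp: field_simps power2_eq_square)
  qed (intro continuous_intros)
  also have "\<dots> = ?rhs"
    using assms by (simp add: field_simps)
  finally show ?thesis .
qed

lemma set_integral_square_exp_decay:
  fixes a l d c :: real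
  assumes "a > 0" "d \<ge> 0"
  shows "(LINT s:{0..d}|lborel. l * (s + c)^2 * exp (- (a * s)))
       = l / a^3 * ((1 + c * a)^2 + 1 - ((1 + (d + c) * a)^2 + 1) * exp (- (a * d)))" (is "_ = ?rhs")
proof -
  have "(LINT s:{0..d}|lborel. l * (s + c)^2 * exp (- (a * s)))
      = - l / a^3 * exp (- (a * d)) * ((1 + (d + c) * a)^2 + 1)
        - - l / a^3 * exp (- (a * 0)) * ((1 + (0 + c) * a)^2 + 1)"
    unfolding set_lebesgue_integral_def
  proof (rule integral_FTC_atLeastAtMost[OF assms(2)])
    fix x
    show "((\<lambda>s. - l / a^3 * exp (- (a * s)) * ((1 + (s + c) * a)^2 + 1))
        has_vector_derivative l * (x + c)^2 * exp (- (a * x))) (at x within {0..d})"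
      unfolding has_real_derivative_iff_has_vector_derivative[symmetric]
      using assms by (auto intro!: derivative_eq_intros simp: field_simps power2_eq_square power3_eq_cube)
  qed (intro continuous_intros)
  also have "\<dots> = ?rhs"
    using assms by (simp add: field_simps)
  finally show ?thesis .
qed

lemma kth_partial_moment_0:
  assumes "1 \<le> K" "K \<le> N" "lam > 0" "TD > c"
  shows "real K * real (N choose K) * kth_partial_moment lam c TD N K 0 = 1 - coefZ lam c TD N K"
proof -
  have "real K * real (N choose K) * kth_partial_moment lam c TD N K 0
      = (\<Sum>j<K. coefB N K j / coefU N K j - coefB N K j * coefV lam c TD N K j / coefU N K j)"
    unfolding kth_partial_moment_eq_sum_coefB[OF assms(1,2)]
  proof (intro sum.cong refl)
    fix j
    have "(LINT s:{0..TD - c}|lborel. lam * exp (- (lam * coefU N K j * s)))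
        = lam / (lam * coefU N K j) * (1 - exp (- (lam * coefU N K j * (TD - c))))"
      using assms coefU_pos[OF assms(2)] by (intro set_integral_exp_decay) auto
    also have "\<dots> = (1 - coefV lam c TD N K j) / coefU N K j"
      using assms(3) by (simp add: coefV_def)
    finally show "coefB N K j * (LINT s:{0..TD - c}|lborel. lam * (s + c) ^ 0 * exp (- (lam * coefU N K j * s)))
        = coefB N K j / coefU N K j - coefB N K j * coefV lam c TD N K j / coefU N K j"
      unfolding power_0 mult_1_right by (simp add: diff_divide_distrib right_diff_distrib)
  qed
  also have "\<dots> = 1 - coefZ lam c TD N K"
    by (simp add: sum_subtractf sum_coefB_div_coefU[OF assms(1,2)] coefZ_def)
  finally show ?thesis .
qed

lemma kth_partial_moment_1:
  assumes "1 \<le> K" "K \<le> N" "lam > 0" "TD > c"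
  shows "real K * real (N choose K) * kth_partial_moment lam c TD N K 1
       = (\<Sum>j<K. coefB N K j / (lam * (coefU N K j)^2) *
             (1 + c * lam * coefU N K j - (1 + TD * lam * coefU N K j) * coefV lam c TD N K j))"
  unfolding kth_partial_moment_eq_sum_coefB[OF assms(1,2)]
proof (intro sum.cong refl)
  fix j
  have "(LINT s:{0..TD - c}|lborel. lam * (s + c) * exp (- (lam * coefU N K j * s)))
      = lam / (lam * coefU N K j)^2 * (1 + c * (lam * coefU N K j)
         - (1 + (TD - c + c) * (lam * coefU N K j)) * exp (- (lam * coefU N K j * (TD - c))))"
    using assms coefU_pos[OF assms(2)] by (intro set_integral_linear_exp_decay) auto
  then show "coefB N K j * (LINT s:{0..TD - c}|lborel. lam * (s + c) ^ 1 * exp (- (lam * coefU N K j * s)))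
      = coefB N K j / (lam * (coefU N K j)^2) *
          (1 + c * lam * coefU N K j - (1 + TD * lam * coefU N K j) * coefV lam c TD N K j)"
    using assms(3) coefU_pos[OF assms(2)]
    by (simp add: coefV_def field_simps power2_eq_square)
qed

lemma kth_partial_moment_2:
  assumes "1 \<le> K" "K \<le> N" "lam > 0" "TD > c"
  shows "real K * real (N choose K) * kth_partial_moment lam c TD N K 2
       = (\<Sum>j<K. coefB N K j / (lam^2 * (coefU N K j)^3) *
             ((1 + c * lam * coefU N K j)^2 + 1
              - ((1 + TD * lam * coefU N K j)^2 + 1) * coefV lam c TD N K j))"
  unfolding kth_partial_moment_eq_sum_coefB[OF assms(1,2)]
proof (intro sum.cong refl)
  fix j
  have "(LINT s:{0..TD - c}|lborel. lam * (s + c)^2 * exp (- (lam * coefU N K j * s)))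
      = lam / (lam * coefU N K j)^3 * ((1 + c * (lam * coefU N K j))^2 + 1
         - ((1 + (TD - c + c) * (lam * coefU N K j))^2 + 1) * exp (- (lam * coefU N K j * (TD - c))))"
    using assms coefU_pos[OF assms(2)] by (intro set_integral_square_exp_decay) auto
  then show "coefB N K j * (LINT s:{0..TD - c}|lborel. lam * (s + c) ^ 2 * exp (- (lam * coefU N K j * s)))
      = coefB N K j / (lam^2 * (coefU N K j)^3) *
          ((1 + c * lam * coefU N K j)^2 + 1
           - ((1 + TD * lam * coefU N K j)^2 + 1) * coefV lam c TD N K j)"
    using assms(3) coefU_pos[OF assms(2)]
    by (simp add: coefV_def field_simps power2_eq_square power3_eq_cube)
qed

lemma kth_partial_moment_ratio:
  assumes "1 \<le> K" "K \<le> N" "lam > 0" "TD > c"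
  shows "kth_partial_moment lam c TD N K p / kth_partial_moment lam c TD N K 0
       = 1 / (1 - coefZ lam c TD N K) * (real K * real (N choose K) * kth_partial_moment lam c TD N K p)"
proof -
  have "real K * real (N choose K) \<noteq> 0"
    using assms(1,2) by simp
  then show ?thesis
    unfolding kth_partial_moment_0[OF assms, symmetric]
    by (cases "kth_partial_moment lam c TD N K 0 = 0") (simp_all add: field_simps)
qed

section \<open>Conditional moments given the marked events\<close>

lemma borel_measurable_kth_smallest_marked_power:
  assumes "1 \<le> K" "K \<le> N" "n \<in> {1..N}"
  defines "kt \<equiv> kth_smallest N K (\<lambda>i x. x i)"
  shows "(\<lambda>x. indicator {x. kt x < TD \<and> (x n \<le> kt x) = b} x * kt x ^ p)
           \<in> borel_measurable (PiM {1..N} (\<lambda>_. borel :: real measure))"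
proof -
  have "kt \<in> borel_measurable (PiM {1..N} (\<lambda>_. borel))"
    unfolding kt_def using assms(1,2) by (intro borel_measurable_kth_smallest) auto
  \<comment> \<open>the measurable method handles strict comparisons of two measurable functions, not \<open>\<le>\<close>\<close>
  moreover have less_form: "{x. kt x < TD \<and> (x n \<le> kt x) = b} = {x. kt x < TD \<and> (\<not> kt x < x n) = b}"
    by (auto simp: not_less)
  ultimately show ?thesis
    unfolding less_form using assms(3) by measurable
qed

lemma integral_PiM_shexp_kth_smallest_marked:
  assumes "1 \<le> K" "K \<le> N" "n \<in> {1..N}" "lam > 0" "c \<ge> 0"
  defines "kt \<equiv> kth_smallest N K (\<lambda>i x. x i)"
  shows "(LINT x|PiM {1..N} (\<lambda>_. shexp_measure lam c). indicator {x. kt x < TD \<and> (x n \<le> kt x) = b} x * kt x ^ p)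
       = real (\<Sum>m\<in>{1..N}. card (rank_configs N K n b m)) * kth_partial_moment lam c TD N K p"
proof -
  let ?P = "PiM {1..N} (\<lambda>_. shexp_measure lam c)"
  let ?g = "\<lambda>x. indicator {x. kt x < TD \<and> (x n \<le> kt x) = b} x * kt x ^ p"
  have sets_P: "sets ?P = sets (PiM {1..N} (\<lambda>_. borel))"
    by (intro sets_PiM_cong) (simp_all add: sets_shexp_measure)
  have g_meas: "?g \<in> borel_measurable ?P"
    unfolding kt_def measurable_cong_sets[OF sets_P refl]
    using assms(1-3) by (rule borel_measurable_kth_smallest_marked_power)
  have "AE x in ?P. \<forall>i\<in>{1..N}. c < x i"
    using assms(4) prob_space_shexp_measure
    by (intro AE_finite_allI AE_PiM_component AE_shexp_measure_gt) auto
  then have g_nonneg: "AE x in ?P. 0 \<le> ?g x"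
  proof eventually_elim
    case (elim x)
    then have "c < kt x"
      using kth_smallest_mem[OF assms(1,2), of "\<lambda>i x. x i" x] by (auto simp: kt_def)
    then show ?case
      using assms(5) by simp
  qed
  have "(\<integral>\<^sup>+x. ennreal (?g x) \<partial>?P)
      = (\<integral>\<^sup>+x. ennreal (kt x ^ p) * indicator {..<TD} (kt x) * indicator {x. (x n \<le> kt x) = b} x \<partial>?P)"
    by (intro nn_integral_cong) (simp add: indicator_def)
  also have "\<dots> = of_nat (\<Sum>m\<in>{1..N}. card (rank_configs N K n b m)) * ennreal (kth_partial_moment lam c TD N K p)"
    using nn_integral_PiM_kth_smallest_marked[of "shexp_measure lam c" K N n "\<lambda>t. ennreal (t ^ p) * indicator {..<TD} t"]
      nn_integral_shexp_kth_density[OF assms(4,5)] assms(1-4)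
    by (simp add: kt_def prob_space_imp_sigma_finite prob_space_shexp_measure sets_shexp_measure
        emeasure_shexp_measure_singleton)
  finally show ?thesis
    using integral_eq_nn_integral[OF g_meas g_nonneg] kth_partial_moment_nonneg[OF assms(4,5)]
    by (simp add: enn2real_mult ennreal_of_nat_eq_real_of_nat del: of_nat_sum)
qed

lemma (in prob_space) set_integral_kth_smallest_power_marked:
  assumes "1 \<le> K" "K \<le> N" "n \<in> {1..N}" "lam > 0" "c \<ge> 0"
    and T_meas: "\<And>i. i \<in> {1..N} \<Longrightarrow> T i \<in> borel_measurable M"
    and "indep_vars (\<lambda>_. borel) T {1..N}"
    and "\<And>i t. i \<in> {1..N} \<Longrightarrow> cdf (distr M borel (T i)) t = shexp_cdf lam c t"
  shows "(LINT w:{w \<in> space M. kth_smallest N K T w < TD \<and> (T n w \<le> kth_smallest N K T w) = b}|M.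
            kth_smallest N K T w ^ p)
       = real (\<Sum>m\<in>{1..N}. card (rank_configs N K n b m)) * kth_partial_moment lam c TD N K p"
proof -
  let ?B = "PiM {1..N} (\<lambda>_. borel :: real measure)"
  let ?kt = "kth_smallest N K (\<lambda>i x. x i)"
  let ?g = "\<lambda>x. indicator {x. ?kt x < TD \<and> (x n \<le> ?kt x) = b} x * ?kt x ^ p"
  have law: "distr M ?B (\<lambda>w. \<lambda>i\<in>{1..N}. T i w) = PiM {1..N} (\<lambda>_. shexp_measure lam c)"
    using assms(1,2,4,6-8)
    by (intro distr_restrict_eq_PiM_iid real_distribution_shexp_measure)
       (auto simp: cdf_shexp_measure fun_eq_iff)
  have "(\<lambda>w. \<lambda>i\<in>{1..N}. T i w) \<in> measurable M ?B"
    using T_meas by (intro measurable_restrict) auto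
  from integral_distr[OF this borel_measurable_kth_smallest_marked_power[OF assms(1-3)], unfolded law]
  have "(LINT w|M. ?g (\<lambda>i\<in>{1..N}. T i w))
      = real (\<Sum>m\<in>{1..N}. card (rank_configs N K n b m)) * kth_partial_moment lam c TD N K p"
    using integral_PiM_shexp_kth_smallest_marked[OF assms(1-5)] by simp
  moreover have "?g (\<lambda>i\<in>{1..N}. T i w)
      = indicator {w \<in> space M. kth_smallest N K T w < TD \<and> (T n w \<le> kth_smallest N K T w) = b} w
        * kth_smallest N K T w ^ p" if "w \<in> space M" for w
    unfolding indicator_def mem_Collect_eq kth_smallest_restrict using assms(3) that by simp
  ultimately show ?thesis
    unfolding set_lebesgue_integral_def
    by (metis (no_types, lifting) Bochner_Integration.integral_cong real_scaleR_def)
qed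

lemma (in prob_space) cond_exp_event_kth_smallest_power:
  fixes TD :: real and b :: bool
  assumes "1 \<le> K" "K \<le> N" "n \<in> {1..N}" "lam > 0" "c \<ge> 0"
    and T_meas: "\<And>i. i \<in> {1..N} \<Longrightarrow> T i \<in> borel_measurable M"
    and "indep_vars (\<lambda>_. borel) T {1..N}"
    and "\<And>i t. i \<in> {1..N} \<Longrightarrow> cdf (distr M borel (T i)) t = shexp_cdf lam c t"
  defines "E \<equiv> {w \<in> space M. kth_smallest N K T w < TD \<and> (T n w \<le> kth_smallest N K T w) = b}"
  assumes "measure M E > 0"
  shows "cond_exp_event M (\<lambda>w. kth_smallest N K T w ^ p) E
       = kth_partial_moment lam c TD N K p / kth_partial_moment lam c TD N K 0"
proof -
  let ?\<alpha> = "real (\<Sum>m\<in>{1..N}. card (rank_configs N K n b m))"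
  have moment: "(LINT w:E|M. kth_smallest N K T w ^ q) = ?\<alpha> * kth_partial_moment lam c TD N K q" for q
    unfolding E_def by (rule set_integral_kth_smallest_power_marked[OF assms(1-8)])
  have "E \<in> sets M"
  proof -
    have less_form: "E = {w \<in> space M. kth_smallest N K T w < TD \<and> (\<not> kth_smallest N K T w < T n w) = b}"
      unfolding E_def by (auto simp: not_less)
    show ?thesis
      unfolding less_form
      using borel_measurable_kth_smallest[OF assms(1,2) T_meas] T_meas[OF assms(3)] by measurable
  qed
  then have "measure M E = ?\<alpha> * kth_partial_moment lam c TD N K 0"
    using moment[of 0] by (simp add: set_integral_const)
  then show ?thesis
    using \<open>measure M E > 0\<close> unfolding cond_exp_event_def moment by auto
qed

theorem proposition3:
  fixes M :: "'a measure" and T :: "nat \<Rightarrow> 'a \<Rightarrow> real"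
    and N K n :: nat and lam c TD :: real
  assumes "prob_space M"
    and "N \<ge> 1" and "1 \<le> K" and "K \<le> N"
    and "lam > 0" and "c > 0" and "TD > c"
    and "\<And>i. i \<in> {1..N} \<Longrightarrow> T i \<in> borel_measurable M"
    and "prob_space.indep_vars M (\<lambda>_. borel) T {1..N}"
    and "\<And>i t. i \<in> {1..N} \<Longrightarrow> cdf (distr M borel (T i)) t = shexp_cdf lam c t"
    and "n \<in> {1..N}"
    and CS_def: "CS = {w \<in> space M. kth_smallest N K T w < TD \<and>
                         T n w \<le> min TD (kth_smallest N K T w)}"
    and CF_def: "CF = {w \<in> space M. kth_smallest N K T w < TD \<and>
                         T n w > min TD (kth_smallest N K T w)}"
    and "measure M CS > 0" and "measure M CF > 0"
  shows "cond_exp_event M (kth_smallest N K T) CS = cond_exp_event M (kth_smallest N K T) CF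
    \<and> cond_exp_event M (\<lambda>w. (kth_smallest N K T w)^2) CS
        = cond_exp_event M (\<lambda>w. (kth_smallest N K T w)^2) CF
    \<and> cond_exp_event M (kth_smallest N K T) CS
        = 1 / (1 - coefZ lam c TD N K) *
          (\<Sum>j<K. coefB N K j / (lam * (coefU N K j)^2) *
             (1 + c * lam * coefU N K j
              - (1 + TD * lam * coefU N K j) * coefV lam c TD N K j))
    \<and> cond_exp_event M (\<lambda>w. (kth_smallest N K T w)^2) CS
        = 1 / (1 - coefZ lam c TD N K) *
          (\<Sum>j<K. coefB N K j / (lam^2 * (coefU N K j)^3) *
             ((1 + c * lam * coefU N K j)^2 + 1
              - ((1 + TD * lam * coefU N K j)^2 + 1) * coefV lam c TD N K j))"
proof -
  interpret prob_space M by fact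
  let ?m = "kth_partial_moment lam c TD N K"
  have CS: "CS = {w \<in> space M. kth_smallest N K T w < TD \<and> (T n w \<le> kth_smallest N K T w) = True}"
    and CF: "CF = {w \<in> space M. kth_smallest N K T w < TD \<and> (T n w \<le> kth_smallest N K T w) = False}"
    unfolding CS_def CF_def by auto
  have cond: "cond_exp_event M (\<lambda>w. kth_smallest N K T w ^ p)
      {w \<in> space M. kth_smallest N K T w < TD \<and> (T n w \<le> kth_smallest N K T w) = b} = ?m p / ?m 0"
    if "measure M {w \<in> space M. kth_smallest N K T w < TD \<and> (T n w \<le> kth_smallest N K T w) = b} > 0"
    for b p
    using that assms(5,6) by (intro cond_exp_event_kth_smallest_power assms(3,4,8-11)) auto
  have cond_CS: "cond_exp_event M (\<lambda>w. kth_smallest N K T w ^ p) CS = ?m p / ?m 0"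
    and cond_CF: "cond_exp_event M (\<lambda>w. kth_smallest N K T w ^ p) CF = ?m p / ?m 0" for p
    using cond[of True p] cond[of False p] \<open>measure M CS > 0\<close> \<open>measure M CF > 0\<close>
    unfolding CS CF by blast+
  show ?thesis
    using cond_CS[of 1] cond_CS[of 2] cond_CF[of 1] cond_CF[of 2]
      kth_partial_moment_ratio[OF assms(3,4,5,7), of 1] kth_partial_moment_ratio[OF assms(3,4,5,7), of 2]
      kth_partial_moment_1[OF assms(3,4,5,7)] kth_partial_moment_2[OF assms(3,4,5,7)]
    by simp
qed

end
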